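(* Assume $(g,\mathfrak{D})$ satisfy B1–B3 with constant $\kappa>0$. Then for every $X\in\mathbb{R}^{m\times n}$ and all $D'\neq D\in\mathfrak{D}$, $$\frac{|F_X(D')-F_X(D)|}{\|D'-D\|_{1\to2}}\le L_X(\bar g)\Big(1+\frac{1}{\sqrt\kappa}\|D'-D\|_{1\to2}\Big).$$
   Context: $\mathfrak{D}\subset\mathbb{R}^{m\times d}$. B1: $g=\chi_{\mathcal K}$ is the indicator of a set $\mathcal K\subset\mathbb{R}^d$ ($0$ on $\mathcal K$, $+\infty$ outside); B2: $\kappa\|\alpha\|_1^2\le\|D\alpha\|_2^2$ for all $\alpha\in\mathcal K$, $D\in\mathfrak{D}$; B3: $0\in\mathcal K$. $\mathcal{L}_x(D,\alpha)=\tfrac12\|x-D\alpha\|_2^2+g(\alpha)$, $f_x(D)=\inf_\alpha\mathcal{L}_x(D,\alpha)$, $F_X(D)=\frac1n\sum_i f_{x_i}(D)$. $\|\Delta\|_{1\to2}=\max_j\|\delta_j\|_2$. $\bar g(t)=2\sqrt{2t/\kappa}$ and $L_X(\bar g)=\frac1n\sum_i\|x_i\|_2\bar g(\|x_i\|_2^2/2)=\frac{2}{n\sqrt\kappa}\|X\|_F^2$. *)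

theory Defs
  imports "HOL-Analysis.Analysis"
begin

text \<open>Signals x live in real^'m, codes alpha in real^'d, dictionaries D are m x d
  matrices (real^'d^'m), data matrices X are m x n (real^'n^'m) with samples as columns.\<close>

definition l1norm :: "real^'d \<Rightarrow> real" where
  "l1norm \<alpha> = (\<Sum>j\<in>UNIV. \<bar>\<alpha> $ j\<bar>)"

text \<open>g = indicator of K; f_x(D) = inf_alpha (1/2 ||x - D alpha||^2 + g(alpha))
  = inf over alpha in K of 1/2 ||x - D alpha||^2.\<close>
definition fx :: "(real^'d) set \<Rightarrow> real^'m \<Rightarrow> real^'d^'m \<Rightarrow> real" where
  "fx K x D = Inf ((\<lambda>\<alpha>. (1/2) * (norm (x - D *v \<alpha>))\<^sup>2) ` K)"

definition FX :: "(real^'d) set \<Rightarrow> real^'n^'m \<Rightarrow> real^'d^'m \<Rightarrow> real" where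
  "FX K X D = (1 / real CARD('n)) * (\<Sum>i\<in>UNIV. fx K (column i X) D)"

definition norm12 :: "real^'d^'m \<Rightarrow> real" where
  "norm12 \<Delta> = Max (range (\<lambda>j. norm (column j \<Delta>)))"

definition gbar :: "real \<Rightarrow> real \<Rightarrow> real" where
  "gbar \<kappa> t = 2 * sqrt (2 * t / \<kappa>)"

definition LX :: "(real \<Rightarrow> real) \<Rightarrow> real^'n^'m \<Rightarrow> real" where
  "LX g X = (1 / real CARD('n)) *
     (\<Sum>i\<in>UNIV. norm (column i X) * g ((norm (column i X))\<^sup>2 / 2))"

end

theory Submission
  imports Defs
begin

(* Write \<delta> = \<parallel>D' - D\<parallel>_{1\<rightarrow>2}.  For a single sample x only codes \<alpha> \<in> K with
   \<parallel>x - D\<alpha>\<parallel> \<le> \<parallel>x\<parallel> can matter for f_x(D), because \<alpha> = 0 \<in> K already attains \<parallel>x\<parallel>\<^sup>2/2.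
   For such codes \<parallel>D\<alpha>\<parallel> \<le> 2\<parallel>x\<parallel>, so by B2 their \<ell>1 norm is at most r = 2\<parallel>x\<parallel>/\<surd>\<kappa> = gbar(\<parallel>x\<parallel>\<^sup>2/2).
   Since \<parallel>(D' - D)\<alpha>\<parallel> \<le> \<delta> \<parallel>\<alpha>\<parallel>_1, replacing D by D' changes the residual of a relevant code by
   at most \<delta> r, hence f_x(D') \<le> f_x(D) + \<parallel>x\<parallel> \<delta> r + (\<delta> r)\<^sup>2/2 = f_x(D) + \<parallel>x\<parallel> r \<delta> (1 + \<delta>/\<surd>\<kappa>). *)

lemma column_le_norm12: "norm (column j A) \<le> norm12 A"
  unfolding norm12_def by (rule Max_ge) auto

lemma norm12_nonneg: "0 \<le> norm12 A"
  using column_le_norm12[of _ A] norm_ge_zero order_trans by blast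

lemma norm12_minus_commute: "norm12 (A - B) = norm12 (B - A)"
proof -
  have "\<And>j. column j (A - B) = - column j (B - A)"
    by (simp add: column_def vec_eq_iff)
  then show ?thesis unfolding norm12_def by simp
qed

lemma l1norm_nonneg: "0 \<le> l1norm a"
  unfolding l1norm_def by (simp add: sum_nonneg)

text \<open>The (1,2)-norm is the operator norm from \<open>\<ell>1\<close> to \<open>\<ell>2\<close>: \<open>A a\<close> is a combination
  of the columns of \<open>A\<close> with coefficients \<open>a $ i\<close>.\<close>
lemma norm_mult_vec_le_norm12: "norm (A *v a) \<le> norm12 A * l1norm a"
proof -
  have "norm (A *v a) = norm (\<Sum>i\<in>UNIV. (a$i) *s column i A)"
    by (simp add: matrix_mult_sum)
  also have "\<dots> \<le> (\<Sum>i\<in>UNIV. norm ((a$i) *s column i A))"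
    by (rule norm_sum)
  also have "\<dots> \<le> (\<Sum>i\<in>UNIV. norm12 A * \<bar>a$i\<bar>)"
  proof (rule sum_mono)
    fix i
    have "norm ((a$i) *s column i A) = \<bar>a$i\<bar> * norm (column i A)"
      by (simp add: scalar_mult_eq_scaleR)
    also have "\<dots> \<le> \<bar>a$i\<bar> * norm12 A"
      by (rule mult_left_mono[OF column_le_norm12]) simp
    finally show "norm ((a$i) *s column i A) \<le> norm12 A * \<bar>a$i\<bar>"
      by (simp add: mult.commute)
  qed
  also have "\<dots> = norm12 A * l1norm a"
    by (simp add: l1norm_def sum_distrib_left)
  finally show ?thesis .
qed

lemma fx_le:
  assumes "\<alpha> \<in> K"
  shows "fx K x D \<le> (1/2) * (norm (x - D *v \<alpha>))\<^sup>2"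
proof -
  have "bdd_below ((\<lambda>\<alpha>. (1/2) * (norm (x - D *v \<alpha>))\<^sup>2) ` K)"
    by (rule bdd_belowI[of _ 0]) auto
  then show ?thesis
    unfolding fx_def using cInf_lower[OF imageI[OF assms]] by blast
qed

lemma gbar_half_square: "\<kappa> > 0 \<Longrightarrow> gbar \<kappa> ((norm x)\<^sup>2 / 2) = 2 * norm x / sqrt \<kappa>"
  unfolding gbar_def by (simp add: real_sqrt_divide)

lemma l1norm_le_gbar:
  assumes kpos: "\<kappa> > 0"
    and B2: "\<kappa> * (l1norm \<alpha>)\<^sup>2 \<le> (norm (D *v \<alpha>))\<^sup>2"
    and better: "norm (x - D *v \<alpha>) \<le> norm x"
  shows "l1norm \<alpha> \<le> gbar \<kappa> ((norm x)\<^sup>2 / 2)"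
proof -
  have "norm (D *v \<alpha>) \<le> 2 * norm x"
    using norm_triangle_ineq4[of x "x - D *v \<alpha>"] better by simp
  then have "(norm (D *v \<alpha>))\<^sup>2 \<le> (2 * norm x)\<^sup>2"
    by (intro power_mono) auto
  with B2 have "(l1norm \<alpha> * sqrt \<kappa>)\<^sup>2 \<le> (2 * norm x)\<^sup>2"
    using kpos by (simp add: power_mult_distrib mult.commute)
  then have "l1norm \<alpha> * sqrt \<kappa> \<le> 2 * norm x"
    by (rule power2_le_imp_le) simp
  then show ?thesis
    using kpos by (simp add: gbar_half_square pos_le_divide_eq)
qed

lemma fx_perturbation:
  assumes zero: "0 \<in> K" and r: "0 \<le> r"
    and radius: "\<And>\<alpha>. \<alpha> \<in> K \<Longrightarrow> norm (x - D *v \<alpha>) \<le> norm x \<Longrightarrow> l1norm \<alpha> \<le> r"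
  shows "fx K x D' - fx K x D \<le> norm x * (norm12 (D' - D) * r) + (norm12 (D' - D) * r)\<^sup>2 / 2"
    (is "_ \<le> ?C")
proof -
  define e where "e = norm12 (D' - D) * r"
  have e: "0 \<le> e" unfolding e_def using norm12_nonneg[of "D' - D"] r by simp
  have fx'_zero: "fx K x D' \<le> (1/2) * (norm x)\<^sup>2"
    using fx_le[OF zero, of x D'] by simp
  have "fx K x D' - ?C \<le> (1/2) * (norm (x - D *v \<alpha>))\<^sup>2" if \<alpha>: "\<alpha> \<in> K" for \<alpha>
  proof (cases "norm (x - D *v \<alpha>) \<le> norm x")
    case False
    then have "(norm x)\<^sup>2 \<le> (norm (x - D *v \<alpha>))\<^sup>2"
      by (simp add: power_mono)
    moreover have "0 \<le> norm x * e + e\<^sup>2 / 2" using e by simp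
    ultimately show ?thesis using fx'_zero unfolding e_def[symmetric] by linarith
  next
    case True
    have "norm ((D' - D) *v \<alpha>) \<le> norm12 (D' - D) * l1norm \<alpha>"
      by (rule norm_mult_vec_le_norm12)
    also have "\<dots> \<le> e"
      unfolding e_def by (rule mult_left_mono[OF radius[OF \<alpha> True] norm12_nonneg])
    finally have shift: "norm ((D' - D) *v \<alpha>) \<le> e" .
    have "x - D' *v \<alpha> = (x - D *v \<alpha>) - (D' - D) *v \<alpha>"
      by (simp add: algebra_simps)
    then have "norm (x - D' *v \<alpha>) \<le> norm (x - D *v \<alpha>) + norm ((D' - D) *v \<alpha>)"
      using norm_triangle_ineq4 by metis
    with shift have "norm (x - D' *v \<alpha>) \<le> norm (x - D *v \<alpha>) + e"
      by linarith
    then have "(norm (x - D' *v \<alpha>))\<^sup>2 \<le> (norm (x - D *v \<alpha>) + e)\<^sup>2"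
      by (simp add: power_mono)
    also have "\<dots> \<le> (norm (x - D *v \<alpha>))\<^sup>2 + 2 * norm x * e + e\<^sup>2"
      using True e by (simp add: power2_sum mult_right_mono)
    finally show ?thesis
      using fx_le[OF \<alpha>, of x D'] unfolding e_def[symmetric] by simp
  qed
  then have "fx K x D' - ?C \<le> fx K x D"
    unfolding fx_def[of K x D] by (intro cInf_greatest) (use zero in auto)
  then show ?thesis by simp
qed

lemma fx_lipschitz:
  assumes kpos: "\<kappa> > 0"
    and B2: "\<And>\<alpha> E. \<alpha> \<in> K \<Longrightarrow> E \<in> Dset \<Longrightarrow> \<kappa> * (l1norm \<alpha>)\<^sup>2 \<le> (norm (E *v \<alpha>))\<^sup>2"
    and B3: "0 \<in> K"
    and D: "D \<in> Dset" and D': "D' \<in> Dset"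
  shows "\<bar>fx K x D' - fx K x D\<bar> \<le>
           norm x * gbar \<kappa> ((norm x)\<^sup>2 / 2) * norm12 (D' - D) * (1 + norm12 (D' - D) / sqrt \<kappa>)"
proof -
  define r where "r = gbar \<kappa> ((norm x)\<^sup>2 / 2)"
  define \<delta> where "\<delta> = norm12 (D' - D)"
  have r_eq: "r = 2 * norm x / sqrt \<kappa>"
    unfolding r_def using kpos by (rule gbar_half_square)
  have r_nonneg: "0 \<le> r" unfolding r_eq using kpos by simp
  have bound_eq: "norm x * (\<delta> * r) + (\<delta> * r)\<^sup>2 / 2 = norm x * r * \<delta> * (1 + \<delta> / sqrt \<kappa>)"
    unfolding r_eq using kpos by (simp add: field_simps power2_eq_square)
  have "fx K x E' - fx K x E \<le> norm x * r * \<delta> * (1 + \<delta> / sqrt \<kappa>)"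
    if E: "E \<in> Dset" and \<delta>E: "norm12 (E' - E) = \<delta>" for E E'
  proof -
    have radius: "l1norm \<alpha> \<le> r" if "\<alpha> \<in> K" "norm (x - E *v \<alpha>) \<le> norm x" for \<alpha>
      unfolding r_def using l1norm_le_gbar[OF kpos B2[OF that(1) E] that(2)] .
    have "fx K x E' - fx K x E \<le> norm x * (norm12 (E' - E) * r) + (norm12 (E' - E) * r)\<^sup>2 / 2"
      using B3 r_nonneg radius by (rule fx_perturbation)
    then show ?thesis unfolding \<delta>E bound_eq .
  qed
  from this[OF D, of D'] this[OF D', of D] show ?thesis
    unfolding \<delta>_def r_def using norm12_minus_commute[of D D'] by (simp add: abs_le_iff)
qed

lemma LX_nonneg: "\<kappa> > 0 \<Longrightarrow> 0 \<le> LX (gbar \<kappa>) X"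
  unfolding LX_def gbar_def by (simp add: sum_nonneg)

lemma FX_lipschitz:
  fixes X :: "real^'n^'m"
  assumes kpos: "\<kappa> > 0"
    and B2: "\<And>\<alpha> E. \<alpha> \<in> K \<Longrightarrow> E \<in> Dset \<Longrightarrow> \<kappa> * (l1norm \<alpha>)\<^sup>2 \<le> (norm (E *v \<alpha>))\<^sup>2"
    and B3: "0 \<in> K"
    and D: "D \<in> Dset" and D': "D' \<in> Dset"
  shows "\<bar>FX K X D' - FX K X D\<bar> \<le>
           LX (gbar \<kappa>) X * norm12 (D' - D) * (1 + norm12 (D' - D) / sqrt \<kappa>)"
proof -
  define c where "c = norm12 (D' - D) * (1 + norm12 (D' - D) / sqrt \<kappa>)"
  have "\<bar>FX K X D' - FX K X D\<bar> =
          (1 / real CARD('n)) * \<bar>\<Sum>i\<in>UNIV. fx K (column i X) D' - fx K (column i X) D\<bar>"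
    unfolding FX_def right_diff_distrib[symmetric] sum_subtractf[symmetric] abs_mult by simp
  also have "\<dots> \<le> (1 / real CARD('n)) *
      (\<Sum>i\<in>UNIV. norm (column i X) * gbar \<kappa> ((norm (column i X))\<^sup>2 / 2) * c)"
    unfolding c_def mult.assoc[symmetric]
    by (intro mult_left_mono order_trans[OF sum_abs] sum_mono
        fx_lipschitz[OF kpos B2 B3 D D']) auto
  also have "\<dots> = LX (gbar \<kappa>) X * c"
    unfolding LX_def by (simp add: sum_distrib_right)
  finally show ?thesis unfolding c_def by (simp add: mult.assoc)
qed

theorem mainTheorem10:
  fixes K :: "(real^'d) set" and Dset :: "(real^'d^'m) set" and \<kappa> :: real
    and X :: "real^'n^'m" and D D' :: "real^'d^'m"
  assumes kpos: "\<kappa> > 0"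
    and B2: "\<And>\<alpha> E. \<alpha> \<in> K \<Longrightarrow> E \<in> Dset \<Longrightarrow> \<kappa> * (l1norm \<alpha>)\<^sup>2 \<le> (norm (E *v \<alpha>))\<^sup>2"
    and B3: "0 \<in> K"
    and D: "D \<in> Dset" and D': "D' \<in> Dset" and ne: "D' \<noteq> D"
  shows "\<bar>FX K X D' - FX K X D\<bar> / norm12 (D' - D)
           \<le> LX (gbar \<kappa>) X * (1 + norm12 (D' - D) / sqrt \<kappa>)"
proof -
  define \<delta> where "\<delta> = norm12 (D' - D)"
  have bound: "\<bar>FX K X D' - FX K X D\<bar> \<le> LX (gbar \<kappa>) X * \<delta> * (1 + \<delta> / sqrt \<kappa>)"
    unfolding \<delta>_def by (rule FX_lipschitz[OF kpos B2 B3 D D'])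
  have "0 \<le> LX (gbar \<kappa>) X * (1 + \<delta> / sqrt \<kappa>)"
    using LX_nonneg[OF kpos] norm12_nonneg[of "D' - D"] kpos unfolding \<delta>_def
    by (intro mult_nonneg_nonneg) auto
  moreover have "\<delta> > 0 \<Longrightarrow> \<bar>FX K X D' - FX K X D\<bar> / \<delta> \<le> LX (gbar \<kappa>) X * (1 + \<delta> / sqrt \<kappa>)"
    using bound by (simp add: divide_le_eq mult.commute mult.left_commute)
  ultimately show ?thesis
    using norm12_nonneg[of "D' - D"] unfolding \<delta>_def[symmetric] by fastforce
qed

end
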